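(* Let $C=\{c_1,\dots,c_m\}\subset\mathbb{R}^d_{\ge 0}$ be a finite nonempty set of vectors with $\|c_j\|_2=1$, and let $v\in\mathbb{R}^d_{\ge 0}$ with $\|v\|_2=1$ and $v\in\mathrm{Cone}(C)$. Then $\max_{c\in C}v^\top c\ge d^{-1/2}$.
   Context: $\mathrm{Cone}(C)$ is the set of nonnegative linear combinations of elements of $C$. *)

theory Defs
  imports "HOL-Analysis.Analysis"
begin

definition nonneg_cone :: "('a::real_vector) set \<Rightarrow> 'a set" where
  "nonneg_cone C = {x. \<exists>a. (\<forall>c\<in>C. a c \<ge> 0) \<and> x = (\<Sum>c\<in>C. a c *\<^sub>R c)}"

end

theory Submission
  imports Defs
begin

text \<open>Write \<open>v = \<Sum>c\<in>C. a c *\<^sub>R c\<close> with \<open>a \<ge> 0\<close> and let \<open>M\<close> be the largest \<open>v \<bullet> c\<close>.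
  Then \<open>1 = v \<bullet> v \<le> M \<Sum>a\<close>. On the other hand, the all-ones vector \<open>\<one>\<close> satisfies
  \<open>\<one> \<bullet> c = \<parallel>c\<parallel>\<^sub>1 \<ge> \<parallel>c\<parallel>\<^sub>2 = 1\<close> for every nonnegative unit vector \<open>c\<close>, so
  \<open>\<Sum>a \<le> \<one> \<bullet> v \<le> \<parallel>\<one>\<parallel> \<parallel>v\<parallel> = \<surd>d\<close> by Cauchy-Schwarz. Hence \<open>1 \<le> M \<surd>d\<close>.\<close>

lemma inner_sum_scaleR_le_weight_sum:
  fixes w :: "'a::real_inner"
  assumes "\<forall>c\<in>C. a c \<ge> 0" and "\<forall>c\<in>C. w \<bullet> c \<le> M"
  shows "w \<bullet> (\<Sum>c\<in>C. a c *\<^sub>R c) \<le> M * sum a C"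
proof -
  have "w \<bullet> (\<Sum>c\<in>C. a c *\<^sub>R c) = (\<Sum>c\<in>C. a c * (w \<bullet> c))"
    by (simp add: inner_sum_right)
  also have "\<dots> \<le> (\<Sum>c\<in>C. a c * M)"
    using assms by (intro sum_mono mult_left_mono) auto
  finally show ?thesis
    by (simp add: sum_distrib_left mult.commute)
qed

lemma inner_sum_scaleR_ge_weight_sum:
  fixes w :: "'a::real_inner"
  assumes "\<forall>c\<in>C. a c \<ge> 0" and "\<forall>c\<in>C. w \<bullet> c \<ge> m"
  shows "m * sum a C \<le> w \<bullet> (\<Sum>c\<in>C. a c *\<^sub>R c)"
  using inner_sum_scaleR_le_weight_sum[of C a "-w" "-m"] assms by simp

lemma inner_one_cart_eq_sum: "(\<chi> i. 1) \<bullet> x = (\<Sum>i\<in>UNIV. x $ i)"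
  by (simp add: inner_vec_def)

lemma norm_le_inner_one_cart:
  fixes x :: "real ^ 'n"
  assumes "\<forall>i. x $ i \<ge> 0"
  shows "norm x \<le> (\<chi> i. 1) \<bullet> x"
  using norm_le_l1_cart[of x] assms by (simp add: inner_one_cart_eq_sum)

lemma norm_one_cart: "norm (\<chi> i. 1 :: real ^ 'n) = sqrt (real CARD('n))"
  by (simp add: norm_eq_sqrt_inner inner_one_cart_eq_sum)

theorem lemma2:
  fixes C :: "(real ^ 'n) set" and v :: "real ^ 'n"
  assumes "finite C" and "C \<noteq> {}"
    and "\<forall>c\<in>C. (\<forall>i. c $ i \<ge> 0) \<and> norm c = 1"
    and "\<forall>i. v $ i \<ge> 0" and "norm v = 1"
    and "v \<in> nonneg_cone C"
  shows "(MAX c\<in>C. v \<bullet> c) \<ge> 1 / sqrt (real CARD('n))"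
proof -
  define M where "M = (MAX c\<in>C. v \<bullet> c)"
  define d where "d = real CARD('n)"
  obtain a where a: "\<forall>c\<in>C. a c \<ge> 0" and v: "v = (\<Sum>c\<in>C. a c *\<^sub>R c)"
    using assms(6) unfolding nonneg_cone_def by blast
  have "\<forall>c\<in>C. v \<bullet> c \<le> M"
    using assms(1) by (simp add: M_def)
  then have "v \<bullet> v \<le> M * sum a C"
    using inner_sum_scaleR_le_weight_sum[OF a] v by metis
  then have upper: "1 \<le> M * sum a C"
    using assms(5) by (simp add: dot_square_norm)
  have "\<forall>c\<in>C. (\<chi> i. 1) \<bullet> c \<ge> 1"
    using assms(3) norm_le_inner_one_cart by fastforce
  then have "sum a C \<le> (\<chi> i. 1) \<bullet> v"
    using inner_sum_scaleR_ge_weight_sum[OF a, of 1] v by simp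
  also have "\<dots> \<le> sqrt d"
    using norm_cauchy_schwarz[of "\<chi> i. 1" v] assms(5) by (simp add: norm_one_cart d_def)
  finally have lower: "sum a C \<le> sqrt d" .
  have "M > 0"
    using upper mult_nonpos_nonneg[of M "sum a C"] sum_nonneg[of C a] a by fastforce
  with upper lower have "1 \<le> M * sqrt d"
    by (meson mult_left_mono less_imp_le order_trans)
  moreover have "sqrt d > 0" by (simp add: d_def)
  ultimately show ?thesis
    by (simp add: M_def d_def field_simps)
qed

end
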